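(* Let $p$ be an odd prime, $R=F_p+vF_p$ with $v^2=v$, $\theta=\lambda+v\mu$ ($\lambda,\mu\in F_p$) a unit of $R$, and $R_n=R[x]/\langle x^n-\theta\rangle$. Let $C$ be an ideal in $R_n$. Then there exists a unique polynomial $g(x)=vg(x)^{\sigma}+(1-v)g(x)^{\tau}\in C$ such that $C=\langle g(x)\rangle$ with $g(x)^\sigma$ and $g(x)^\tau$ monic in $F_p[x]$; furthermore, $g(x)$ is a divisor of $x^n-\theta$. In particular, $R_n$ is a principal ideal ring.
   Context: Every element of $R$ is uniquely $va+(1-v)b$ with $a,b\in F_p$; define $\sigma,\tau:R\to F_p$ by $\sigma(va+(1-v)b)=a$, $\tau(va+(1-v)b)=b$. For $f(x)=\sum a_ix^i\in R[x]$ put $f(x)^\sigma=\sum\sigma(a_i)x^i$ and $f(x)^\tau=\sum\tau(a_i)x^i$, so $f(x)=vf(x)^\sigma+(1-v)f(x)^\tau$. $\langle g\rangle$ denotes the ideal generated by $g$. *)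

theory Defs
  imports "HOL-Computational_Algebra.Computational_Algebra" "HOL-Library.Cardinality"
begin

text \<open>The ring R = F_p + v F_p with v^2 = v: the element VR a b stands for a + v b.\<close>

datatype 'a vr = VR 'a 'a

instantiation vr :: (comm_ring_1) comm_ring_1
begin
definition "0 = VR 0 0"
definition "1 = VR 1 0"
fun plus_vr where "plus_vr (VR a b) (VR c d) = VR (a + c) (b + d)"
fun minus_vr where "minus_vr (VR a b) (VR c d) = VR (a - c) (b - d)"
fun uminus_vr where "uminus_vr (VR a b) = VR (- a) (- b)"
fun times_vr where "times_vr (VR a b) (VR c d) = VR (a * c) (a * d + b * c + b * d)"
instance
proof
  fix x y z :: "'a vr"
  show "x * y * z = x * (y * z)"
    by (cases x; cases y; cases z) (simp add: algebra_simps)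
  show "x * y = y * x" by (cases x; cases y) (simp add: algebra_simps)
  show "1 * x = x" by (cases x) (simp add: one_vr_def)
  show "x + y + z = x + (y + z)" by (cases x; cases y; cases z) (simp add: algebra_simps)
  show "x + y = y + x" by (cases x; cases y) (simp add: algebra_simps)
  show "0 + x = x" by (cases x) (simp add: zero_vr_def)
  show "- x + x = 0" by (cases x) (simp add: zero_vr_def)
  show "x - y = x + - y" by (cases x; cases y) simp
  show "(x + y) * z = x * z + y * z" by (cases x; cases y; cases z) (simp add: algebra_simps)
  show "(0::'a vr) \<noteq> 1" by (simp add: zero_vr_def one_vr_def)
qed
end

definition vv :: "'a::comm_ring_1 vr" where "vv = VR 0 1"
definition emb :: "'a::comm_ring_1 \<Rightarrow> 'a vr" where "emb a = VR a 0"

definition sigma :: "'a::comm_ring_1 vr \<Rightarrow> 'a" where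
  "sigma x = (THE a. \<exists>b. x = vv * emb a + (1 - vv) * emb b)"
definition tau :: "'a::comm_ring_1 vr \<Rightarrow> 'a" where
  "tau x = (THE b. \<exists>a. x = vv * emb a + (1 - vv) * emb b)"

definition is_ideal :: "'b::comm_ring_1 set \<Rightarrow> bool" where
  "is_ideal I \<longleftrightarrow> 0 \<in> I \<and> (\<forall>x\<in>I. \<forall>y\<in>I. x + y \<in> I) \<and> (\<forall>x\<in>I. \<forall>r. r * x \<in> I)"

end

theory Submission imports Defs begin

text \<open>
  The map x \<mapsto> (sigma x, tau x) is a ring isomorphism R \<cong> F \<times> F, hence R[x] \<cong> F[x] \<times> F[x]
  coefficientwise.  An ideal C of R[x] therefore has ideal images sigma(C) and tau(C) in the
  principal ideal domain F[x]; if both are nonzero they have monic generators h1, h2, and the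
  polynomial g with components h1, h2 lies in C (as v c1 + (1 - v) c2) and divides every
  element of C componentwise.  Ideals of R_n are ideals of R[x] containing x^n - \<theta>, whose
  components are monic, so g divides x^n - \<theta> and generates C modulo it.  Two such generators
  are associates with monic components, hence equal.
\<close>

lemma vr_component_decomp: "vv * emb a + (1 - vv) * emb b = VR b (a - b)"
  by (simp add: vv_def emb_def one_vr_def)

text \<open>VR c d = c + v d = v (c + d) + (1 - v) c.\<close>

lemma sigma_VR [simp]: "sigma (VR c d) = c + d"
  unfolding sigma_def by (rule the_equality) (auto simp: vr_component_decomp)

lemma tau_VR [simp]: "tau (VR c d) = c"
  unfolding tau_def by (rule the_equality) (auto simp: vr_component_decomp intro: exI[of _ "c + d"])

lemma sigma_0 [simp]: "sigma 0 = 0" and tau_0 [simp]: "tau 0 = 0"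
  by (simp_all add: zero_vr_def)

lemma sigma_1 [simp]: "sigma 1 = 1" and tau_1 [simp]: "tau 1 = 1"
  by (simp_all add: one_vr_def)

lemma sigma_add: "sigma (x + y) = sigma x + sigma y"
  and tau_add: "tau (x + y) = tau x + tau y"
  by (cases x; cases y; simp add: algebra_simps)+

lemma sigma_mult: "sigma (x * y) = sigma x * sigma y"
  and tau_mult: "tau (x * y) = tau x * tau y"
  by (cases x; cases y; simp add: algebra_simps)+

lemma vr_eqI: "sigma x = sigma y \<Longrightarrow> tau x = tau y \<Longrightarrow> x = y"
  by (cases x; cases y) simp

lemma map_poly_add_hom:
  assumes "f 0 = 0" "\<And>x y. f (x + y) = f x + f y"
  shows "map_poly f (p + q) = map_poly f p + map_poly f q"
  by (intro poly_eqI) (simp add: assms coeff_map_poly)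

lemma map_poly_mult_hom:
  fixes f :: "'a::comm_ring_1 \<Rightarrow> 'b::comm_ring_1"
  assumes "f 0 = 0" "\<And>x y. f (x + y) = f x + f y" "\<And>x y. f (x * y) = f x * f y"
  shows "map_poly f (p * q) = map_poly f p * map_poly f q"
  by (induction p) (simp_all add: assms map_poly_add_hom map_poly_smult map_poly_pCons algebra_simps)

abbreviation sigma_poly :: "'a::comm_ring_1 vr poly \<Rightarrow> 'a poly" where
  "sigma_poly \<equiv> map_poly sigma"

abbreviation tau_poly :: "'a::comm_ring_1 vr poly \<Rightarrow> 'a poly" where
  "tau_poly \<equiv> map_poly tau"

lemma sigma_poly_add: "sigma_poly (p + q) = sigma_poly p + sigma_poly q"
  and tau_poly_add: "tau_poly (p + q) = tau_poly p + tau_poly q"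
  by (simp_all add: map_poly_add_hom sigma_add tau_add)

lemma sigma_poly_mult: "sigma_poly (p * q) = sigma_poly p * sigma_poly q"
  and tau_poly_mult: "tau_poly (p * q) = tau_poly p * tau_poly q"
  by (simp_all add: map_poly_mult_hom sigma_add sigma_mult tau_add tau_mult)

lemma sigma_poly_diff: "sigma_poly (p - q) = sigma_poly p - sigma_poly q"
  and tau_poly_diff: "tau_poly (p - q) = tau_poly p - tau_poly q"
  using sigma_poly_add[of "p - q" q] tau_poly_add[of "p - q" q] by (simp_all add: eq_diff_eq)

lemma vr_poly_eqI: "sigma_poly p = sigma_poly q \<Longrightarrow> tau_poly p = tau_poly q \<Longrightarrow> p = q"
  by (rule poly_eqI, rule vr_eqI) (metis coeff_map_poly sigma_0 tau_0)+

text \<open>The polynomial v f + (1 - v) g, written as g + v (f - g).\<close>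

definition vr_poly_join :: "'a::comm_ring_1 poly \<Rightarrow> 'a poly \<Rightarrow> 'a vr poly" where
  "vr_poly_join f g = map_poly (\<lambda>c. VR c 0) g + smult vv (map_poly (\<lambda>c. VR c 0) (f - g))"

lemma sigma_poly_join [simp]: "sigma_poly (vr_poly_join f g) = f"
  and tau_poly_join [simp]: "tau_poly (vr_poly_join f g) = g"
  by (rule poly_eqI; simp add: vr_poly_join_def coeff_map_poly zero_vr_def vv_def sigma_add tau_add)+

lemma vr_poly_dvd_iff:
  fixes p q :: "'a::comm_ring_1 vr poly"
  shows "p dvd q \<longleftrightarrow> sigma_poly p dvd sigma_poly q \<and> tau_poly p dvd tau_poly q"
proof
  assume "p dvd q"
  then show "sigma_poly p dvd sigma_poly q \<and> tau_poly p dvd tau_poly q"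
    by (auto simp: sigma_poly_mult tau_poly_mult elim!: dvdE)
next
  assume "sigma_poly p dvd sigma_poly q \<and> tau_poly p dvd tau_poly q"
  then obtain a b where "sigma_poly q = sigma_poly p * a" "tau_poly q = tau_poly p * b"
    by (auto elim!: dvdE)
  then have "q = p * vr_poly_join a b"
    by (intro vr_poly_eqI) (simp_all add: sigma_poly_mult tau_poly_mult)
  then show "p dvd q" by simp
qed

lemma is_ideal_image_surj_hom:
  fixes F :: "'a::comm_ring_1 \<Rightarrow> 'b::comm_ring_1"
  assumes C: "is_ideal C" and "F 0 = 0" and add: "\<And>x y. F (x + y) = F x + F y"
    and mult: "\<And>x y. F (x * y) = F x * F y" and "surj F"
  shows "is_ideal (F ` C)"
  unfolding is_ideal_def
proof (intro conjI ballI allI)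
  show "0 \<in> F ` C" using C \<open>F 0 = 0\<close> unfolding is_ideal_def by force
  show "x + y \<in> F ` C" if "x \<in> F ` C" "y \<in> F ` C" for x y
    using that C unfolding is_ideal_def by (auto simp flip: add)
  show "r * x \<in> F ` C" if x: "x \<in> F ` C" for x r
  proof -
    obtain c where "c \<in> C" "x = F c" using x by blast
    moreover obtain s where "r = F s" using \<open>surj F\<close> by (metis surjD)
    ultimately show ?thesis using C unfolding is_ideal_def by (auto simp flip: mult)
  qed
qed

lemma poly_ideal_monic_generator:
  fixes I :: "'a::field poly set"
  assumes I: "is_ideal I" and "f0 \<in> I" "f0 \<noteq> 0"
  shows "\<exists>h\<in>I. lead_coeff h = 1 \<and> (\<forall>f\<in>I. h dvd f)"
proof -
  have add: "x + y \<in> I" if "x \<in> I" "y \<in> I" for x y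
    using I that unfolding is_ideal_def by blast
  have mult: "r * x \<in> I" if "x \<in> I" for x r
    using I that unfolding is_ideal_def by blast
  define d where "d = (LEAST k. \<exists>f\<in>I. f \<noteq> 0 \<and> degree f = k)"
  have "\<exists>m\<in>I. m \<noteq> 0 \<and> degree m = d"
    unfolding d_def by (rule LeastI_ex) (use assms in blast)
  then obtain m where m: "m \<in> I" "m \<noteq> 0" "degree m = d" by blast
  define h where "h = smult (inverse (lead_coeff m)) m"
  have "h \<in> I" using mult[OF m(1), of "[:inverse (lead_coeff m):]"] by (simp add: h_def)
  moreover have "lead_coeff h = 1" "degree h = d"
    using m(2,3) leading_coeff_0_iff[of m] by (auto simp: h_def)
  moreover have "h dvd f" if "f \<in> I" for f
  proof (rule ccontr)
    assume "\<not> h dvd f"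
    then have nz: "f mod h \<noteq> 0" by (simp add: mod_eq_0_iff_dvd)
    have "f mod h = f + (- (f div h)) * h" by (simp add: mod_div_mult_eq[symmetric] algebra_simps)
    then have "f mod h \<in> I" using add[OF \<open>f \<in> I\<close> mult[OF \<open>h \<in> I\<close>]] by presburger
    have "d \<le> degree (f mod h)" unfolding d_def by (rule Least_le) (use nz \<open>f mod h \<in> I\<close> in blast)
    moreover have "h \<noteq> 0" using \<open>lead_coeff h = 1\<close> by auto
    then have "degree (f mod h) < degree h" using nz by (rule degree_mod_less')
    ultimately show False using \<open>degree h = d\<close> by simp
  qed
  ultimately show ?thesis by blast
qed

lemma monic_dvd_antisym:
  fixes p q :: "'a::field poly"
  assumes "lead_coeff p = 1" "lead_coeff q = 1" "p dvd q" "q dvd p"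
  shows "p = q"
proof -
  obtain k where k: "q = p * k" using assms(3) by blast
  have "p \<noteq> 0" "q \<noteq> 0" using assms(1,2) by auto
  then have "degree q = degree p"
    using dvd_imp_degree_le[OF assms(3) \<open>q \<noteq> 0\<close>] dvd_imp_degree_le[OF assms(4) \<open>p \<noteq> 0\<close>] by simp
  then have "degree k = 0" using k \<open>q \<noteq> 0\<close> by (simp add: degree_mult_eq)
  then obtain c where c: "k = [:c:]" by (metis degree_eq_zeroE)
  have "lead_coeff q = lead_coeff p * c" using k c by simp
  then have "c = 1" using assms(1,2) by simp
  then show ?thesis using k c by simp
qed

lemma vr_poly_associated_eq:
  fixes g g' :: "'a::field vr poly"
  assumes "g dvd g'" "g' dvd g"
    and "lead_coeff (sigma_poly g) = 1" "lead_coeff (tau_poly g) = 1"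
    and "lead_coeff (sigma_poly g') = 1" "lead_coeff (tau_poly g') = 1"
  shows "g = g'"
proof (rule vr_poly_eqI)
  show "sigma_poly g = sigma_poly g'"
    using assms by (intro monic_dvd_antisym[of "sigma_poly g"]) (simp_all add: vr_poly_dvd_iff)
  show "tau_poly g = tau_poly g'"
    using assms by (intro monic_dvd_antisym[of "tau_poly g"]) (simp_all add: vr_poly_dvd_iff)
qed

lemma vr_poly_ideal_generator:
  fixes C :: "'a::field vr poly set"
  assumes C: "is_ideal C" and "c\<^sub>\<sigma> \<in> C" "sigma_poly c\<^sub>\<sigma> \<noteq> 0" and "c\<^sub>\<tau> \<in> C" "tau_poly c\<^sub>\<tau> \<noteq> 0"
  shows "\<exists>g\<in>C. lead_coeff (sigma_poly g) = 1 \<and> lead_coeff (tau_poly g) = 1 \<and> (\<forall>c\<in>C. g dvd c)"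
proof -
  have surj: "surj sigma_poly" "surj tau_poly"
    by (rule surjI[of _ "\<lambda>f. vr_poly_join f f"], simp)+
  have ideals: "is_ideal (sigma_poly ` C)" "is_ideal (tau_poly ` C)"
    using surj by (intro is_ideal_image_surj_hom[OF C];
        simp add: sigma_poly_add sigma_poly_mult tau_poly_add tau_poly_mult)+
  obtain h\<^sub>1 where
    h\<^sub>1: "h\<^sub>1 \<in> sigma_poly ` C" "lead_coeff h\<^sub>1 = 1" "\<forall>f\<in>sigma_poly ` C. h\<^sub>1 dvd f"
    using poly_ideal_monic_generator[OF ideals(1) imageI[OF assms(2)] assms(3)] by blast
  obtain h\<^sub>2 where
    h\<^sub>2: "h\<^sub>2 \<in> tau_poly ` C" "lead_coeff h\<^sub>2 = 1" "\<forall>f\<in>tau_poly ` C. h\<^sub>2 dvd f"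
    using poly_ideal_monic_generator[OF ideals(2) imageI[OF assms(4)] assms(5)] by blast
  obtain c\<^sub>1 c\<^sub>2 where c: "c\<^sub>1 \<in> C" "h\<^sub>1 = sigma_poly c\<^sub>1" "c\<^sub>2 \<in> C" "h\<^sub>2 = tau_poly c\<^sub>2"
    using h\<^sub>1(1) h\<^sub>2(1) by blast
  define e :: "'a vr poly" where "e = vr_poly_join 1 0"
  define g where "g = vr_poly_join h\<^sub>1 h\<^sub>2"
  have "g = e * c\<^sub>1 + (1 - e) * c\<^sub>2"
    by (rule vr_poly_eqI) (simp_all add: g_def e_def c sigma_poly_add tau_poly_add
        sigma_poly_mult tau_poly_mult sigma_poly_diff tau_poly_diff)
  then have "g \<in> C" using C c unfolding is_ideal_def by simp
  moreover have "\<forall>c\<in>C. g dvd c" using h\<^sub>1(3) h\<^sub>2(3) by (simp add: g_def vr_poly_dvd_iff)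
  ultimately show ?thesis using h\<^sub>1(2) h\<^sub>2(2) unfolding g_def by (metis sigma_poly_join tau_poly_join)
qed

lemma is_ideal_eq_generated_mod:
  fixes C :: "'a::comm_ring_1 set"
  assumes C: "is_ideal C" and "g \<in> C" "N \<in> C" "g dvd N"
  shows "C = {g * q + N * r | q r. True} \<longleftrightarrow> (\<forall>c\<in>C. g dvd c)"
proof
  assume "C = {g * q + N * r | q r. True}"
  then show "\<forall>c\<in>C. g dvd c" using \<open>g dvd N\<close> by (auto intro!: dvd_add dvd_mult2)
next
  assume dvd: "\<forall>c\<in>C. g dvd c"
  show "C = {g * q + N * r | q r. True}"
  proof
    show "C \<subseteq> {g * q + N * r | q r. True}"
    proof
      fix c assume "c \<in> C"
      then obtain k where "c = g * k" using dvd by (meson dvdE)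
      then show "c \<in> {g * q + N * r | q r. True}" by (intro CollectI exI[of _ k] exI[of _ 0]) simp
    qed
    show "{g * q + N * r | q r. True} \<subseteq> C"
    proof
      fix x assume "x \<in> {g * q + N * r | q r. True}"
      then obtain q r where x: "x = q * g + r * N" by (auto simp: mult.commute)
      show "x \<in> C" using C \<open>g \<in> C\<close> \<open>N \<in> C\<close> unfolding x is_ideal_def by blast
    qed
  qed
qed

lemma lead_coeff_monom_minus_const:
  fixes c :: "'a::comm_ring_1"
  assumes "n > 0" shows "lead_coeff (monom 1 n - [:c:]) = 1"
proof -
  have "lead_coeff ([:- c:] + monom 1 n) = 1"
    using assms by (subst lead_coeff_add_le) (simp_all add: degree_monom_eq)
  moreover have "monom 1 n - [:c:] = [:- c:] + monom 1 n" by simp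
  ultimately show ?thesis by metis
qed

theorem corollary3p8:
  fixes p n :: nat and lam mu :: "'a::{field,finite}" and C :: "'a vr poly set"
  assumes "prime p" and "odd p" and "CARD('a) = p" and "n > 0"
    and "(emb lam + vv * emb mu) dvd 1"
    and "is_ideal C"
    and "monom 1 n - [:emb lam + vv * emb mu:] \<in> C"
  shows "\<exists>!g. g \<in> C
           \<and> C = {g * q + (monom 1 n - [:emb lam + vv * emb mu:]) * r | q r. True}
           \<and> lead_coeff (map_poly sigma g) = 1 \<and> lead_coeff (map_poly tau g) = 1
           \<and> g dvd (monom 1 n - [:emb lam + vv * emb mu:])"
proof -
  define N where "N = monom 1 n - [:emb lam + vv * emb mu:]"
  have "N \<in> C" using assms(7) by (simp add: N_def)
  have "sigma_poly N = monom 1 n - [:sigma (emb lam + vv * emb mu):]"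
    "tau_poly N = monom 1 n - [:tau (emb lam + vv * emb mu):]"
    by (simp_all add: N_def sigma_poly_diff tau_poly_diff map_poly_monom map_poly_pCons)
  then have N_monic: "lead_coeff (sigma_poly N) = 1" "lead_coeff (tau_poly N) = 1"
    by (metis lead_coeff_monom_minus_const[OF \<open>n > 0\<close>])+
  then have "sigma_poly N \<noteq> 0" "tau_poly N \<noteq> 0" by auto
  then obtain g where g: "g \<in> C" "lead_coeff (sigma_poly g) = 1" "lead_coeff (tau_poly g) = 1"
    "\<forall>c\<in>C. g dvd c"
    using vr_poly_ideal_generator[OF \<open>is_ideal C\<close> \<open>N \<in> C\<close> _ \<open>N \<in> C\<close>] by blast
  have "g dvd N" using g(4) \<open>N \<in> C\<close> by blast
  show ?thesis
    unfolding N_def[symmetric]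
  proof (rule ex1I[of _ g])
    show "g \<in> C \<and> C = {g * q + N * r | q r. True}
      \<and> lead_coeff (sigma_poly g) = 1 \<and> lead_coeff (tau_poly g) = 1 \<and> g dvd N"
      using g \<open>g dvd N\<close> is_ideal_eq_generated_mod[OF \<open>is_ideal C\<close> g(1) \<open>N \<in> C\<close>] by blast
  next
    fix g' assume g': "g' \<in> C \<and> C = {g' * q + N * r | q r. True}
      \<and> lead_coeff (sigma_poly g') = 1 \<and> lead_coeff (tau_poly g') = 1 \<and> g' dvd N"
    then have "\<forall>c\<in>C. g' dvd c"
      using is_ideal_eq_generated_mod[OF \<open>is_ideal C\<close> _ \<open>N \<in> C\<close>] by blast
    then show "g' = g" using g g' by (intro vr_poly_associated_eq) auto
  qed
qed

end
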